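(* Let $L\subseteq Q$ be an extension of Lie algebras, $I$ an ideal of $L$, and $q_1,\dots,q_n\in Q$ with $[q_i,I]\subseteq L$ for all $i=1,\dots,n$. Let $\mu=\mathrm{ad}_{q_1}\cdots\mathrm{ad}_{q_n}\in A(Q)$. Then $\mu\,(\widetilde I)^n\subseteq A_0$ and $(\widetilde I)^n\mu\subseteq A_0$, where $(\widetilde I)^n$ is the $n$-th power of $\widetilde I$ in the associative algebra $A_Q(L)$.
   Context: Lie algebras over a commutative unital ring $\Phi$. For a Lie algebra $Q$, $\mathrm{ad}_x(y)=[x,y]$, and $A(Q)$ is the associative subalgebra of $\mathrm{End}_\Phi(Q)$ generated by $\{\mathrm{ad}_x:x\in Q\}$. For a Lie subalgebra $L\subseteq Q$: $A_Q(L)$ is the subalgebra of $A(Q)$ generated by $\{\mathrm{ad}_x:x\in L\}$, $A_0=\{\mu\in A(Q):\mu(L)\subseteq L\}$, and for an ideal $I$ of $L$, $\widetilde I$ is the two-sided ideal of $A_Q(L)$ generated by $\{\mathrm{ad}_x:x\in I\}$. *)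

theory Defs
  imports Complex_Main
begin

locale lie_algebra = module sc
  for sc :: "'r::comm_ring_1 \<Rightarrow> 'q::ab_group_add \<Rightarrow> 'q" +
  fixes br :: "'q \<Rightarrow> 'q \<Rightarrow> 'q"
  assumes br_add_left: "br (x + y) z = br x z + br y z"
    and br_add_right: "br x (y + z) = br x y + br x z"
    and br_scale_left: "br (sc c x) y = sc c (br x y)"
    and br_scale_right: "br x (sc c y) = sc c (br x y)"
    and br_alt: "br x x = 0"
    and jacobi: "br x (br y z) + br y (br z x) + br z (br x y) = 0"

definition ad :: "('q \<Rightarrow> 'q \<Rightarrow> 'q) \<Rightarrow> 'q \<Rightarrow> 'q \<Rightarrow> 'q" where
  "ad br x = (\<lambda>y. br x y)"

definition lie_subalgebra ::
  "('r::comm_ring_1 \<Rightarrow> 'q::ab_group_add \<Rightarrow> 'q) \<Rightarrow> ('q \<Rightarrow> 'q \<Rightarrow> 'q) \<Rightarrow> 'q set \<Rightarrow> bool" where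
  "lie_subalgebra sc br L \<longleftrightarrow> 0 \<in> L \<and> (\<forall>x\<in>L. \<forall>y\<in>L. x + y \<in> L)
     \<and> (\<forall>c. \<forall>x\<in>L. sc c x \<in> L) \<and> (\<forall>x\<in>L. \<forall>y\<in>L. br x y \<in> L)"

definition lie_ideal ::
  "('r::comm_ring_1 \<Rightarrow> 'q::ab_group_add \<Rightarrow> 'q) \<Rightarrow> ('q \<Rightarrow> 'q \<Rightarrow> 'q) \<Rightarrow> 'q set \<Rightarrow> 'q set \<Rightarrow> bool" where
  "lie_ideal sc br L I \<longleftrightarrow> I \<subseteq> L \<and> 0 \<in> I \<and> (\<forall>x\<in>I. \<forall>y\<in>I. x + y \<in> I)
     \<and> (\<forall>c. \<forall>x\<in>I. sc c x \<in> I) \<and> (\<forall>x\<in>L. \<forall>y\<in>I. br x y \<in> I)"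

inductive_set alg_gen ::
  "('r::comm_ring_1 \<Rightarrow> 'q::ab_group_add \<Rightarrow> 'q) \<Rightarrow> ('q \<Rightarrow> 'q) set \<Rightarrow> ('q \<Rightarrow> 'q) set"
  for sc :: "'r::comm_ring_1 \<Rightarrow> 'q::ab_group_add \<Rightarrow> 'q" and S :: "('q \<Rightarrow> 'q) set" where
  gen: "f \<in> S \<Longrightarrow> f \<in> alg_gen sc S"
| zero: "(\<lambda>x. 0) \<in> alg_gen sc S"
| add: "f \<in> alg_gen sc S \<Longrightarrow> g \<in> alg_gen sc S \<Longrightarrow> (\<lambda>x. f x + g x) \<in> alg_gen sc S"
| smult: "f \<in> alg_gen sc S \<Longrightarrow> (\<lambda>x. sc c (f x)) \<in> alg_gen sc S"
| mult: "f \<in> alg_gen sc S \<Longrightarrow> g \<in> alg_gen sc S \<Longrightarrow> f \<circ> g \<in> alg_gen sc S"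

inductive_set ideal_gen ::
  "('r::comm_ring_1 \<Rightarrow> 'q::ab_group_add \<Rightarrow> 'q) \<Rightarrow> ('q \<Rightarrow> 'q) set \<Rightarrow> ('q \<Rightarrow> 'q) set \<Rightarrow> ('q \<Rightarrow> 'q) set"
  for sc :: "'r::comm_ring_1 \<Rightarrow> 'q::ab_group_add \<Rightarrow> 'q" and A :: "('q \<Rightarrow> 'q) set"
    and S :: "('q \<Rightarrow> 'q) set" where
  gen: "f \<in> S \<Longrightarrow> f \<in> ideal_gen sc A S"
| zero: "(\<lambda>x. 0) \<in> ideal_gen sc A S"
| add: "f \<in> ideal_gen sc A S \<Longrightarrow> g \<in> ideal_gen sc A S \<Longrightarrow> (\<lambda>x. f x + g x) \<in> ideal_gen sc A S"
| smult: "f \<in> ideal_gen sc A S \<Longrightarrow> (\<lambda>x. sc c (f x)) \<in> ideal_gen sc A S"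
| lmult: "a \<in> A \<Longrightarrow> f \<in> ideal_gen sc A S \<Longrightarrow> a \<circ> f \<in> ideal_gen sc A S"
| rmult: "a \<in> A \<Longrightarrow> f \<in> ideal_gen sc A S \<Longrightarrow> f \<circ> a \<in> ideal_gen sc A S"

inductive_set set_prod ::
  "('r::comm_ring_1 \<Rightarrow> 'q::ab_group_add \<Rightarrow> 'q) \<Rightarrow> ('q \<Rightarrow> 'q) set \<Rightarrow> ('q \<Rightarrow> 'q) set \<Rightarrow> ('q \<Rightarrow> 'q) set"
  for sc :: "'r::comm_ring_1 \<Rightarrow> 'q::ab_group_add \<Rightarrow> 'q" and S :: "('q \<Rightarrow> 'q) set"
    and T :: "('q \<Rightarrow> 'q) set" where
  prod: "f \<in> S \<Longrightarrow> g \<in> T \<Longrightarrow> f \<circ> g \<in> set_prod sc S T"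
| zero: "(\<lambda>x. 0) \<in> set_prod sc S T"
| add: "f \<in> set_prod sc S T \<Longrightarrow> g \<in> set_prod sc S T \<Longrightarrow> (\<lambda>x. f x + g x) \<in> set_prod sc S T"
| smult: "f \<in> set_prod sc S T \<Longrightarrow> (\<lambda>x. sc c (f x)) \<in> set_prod sc S T"

text \<open>n-th power of an ideal J (n \<ge> 1): J^1 = J, J^(n+1) = J J^n.
 (The value at n = 0 is not used.)\<close>
fun ideal_pow ::
  "('r::comm_ring_1 \<Rightarrow> 'q::ab_group_add \<Rightarrow> 'q) \<Rightarrow> ('q \<Rightarrow> 'q) set \<Rightarrow> nat \<Rightarrow> ('q \<Rightarrow> 'q) set" where
  "ideal_pow sc J 0 = {\<lambda>x. 0}"
| "ideal_pow sc J (Suc 0) = J"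
| "ideal_pow sc J (Suc (Suc n)) = set_prod sc J (ideal_pow sc J (Suc n))"

definition AQ :: "('r::comm_ring_1 \<Rightarrow> 'q::ab_group_add \<Rightarrow> 'q) \<Rightarrow> ('q \<Rightarrow> 'q \<Rightarrow> 'q) \<Rightarrow> ('q \<Rightarrow> 'q) set" where
  "AQ sc br = alg_gen sc (ad br ` UNIV)"

definition AQL :: "('r::comm_ring_1 \<Rightarrow> 'q::ab_group_add \<Rightarrow> 'q) \<Rightarrow> ('q \<Rightarrow> 'q \<Rightarrow> 'q) \<Rightarrow> 'q set \<Rightarrow> ('q \<Rightarrow> 'q) set" where
  "AQL sc br L = alg_gen sc (ad br ` L)"

definition A0 :: "('r::comm_ring_1 \<Rightarrow> 'q::ab_group_add \<Rightarrow> 'q) \<Rightarrow> ('q \<Rightarrow> 'q \<Rightarrow> 'q) \<Rightarrow> 'q set \<Rightarrow> ('q \<Rightarrow> 'q) set" where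
  "A0 sc br L = {m \<in> AQ sc br. m ` L \<subseteq> L}"

definition Itilde :: "('r::comm_ring_1 \<Rightarrow> 'q::ab_group_add \<Rightarrow> 'q) \<Rightarrow> ('q \<Rightarrow> 'q \<Rightarrow> 'q) \<Rightarrow> 'q set \<Rightarrow> 'q set \<Rightarrow> ('q \<Rightarrow> 'q) set" where
  "Itilde sc br L I = ideal_gen sc (AQL sc br L) (ad br ` I)"

definition ad_prod :: "('q \<Rightarrow> 'q \<Rightarrow> 'q) \<Rightarrow> 'q list \<Rightarrow> 'q \<Rightarrow> 'q" where
  "ad_prod br qs = foldr (\<lambda>q f. ad br q \<circ> f) qs id"

end

theory Submission
  imports Defs
begin

(* Two filtrations of Q, both starting at L, control the two products.  The lower series
   D_0 = L, D_{k+1} = span [I, D_k] is stable under ad L, raised one step by ad I and,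
   because [q_i, I] \<subseteq> L and ad q_i is a derivation, lowered one step by each ad q_i;
   hence (I~)^n maps L into D_n and \<mu> maps D_n back into D_0 = L.  Dually, the upper
   series U_0 = L, U_{k+1} = {v. [I, v] \<subseteq> U_k} is stable under ad L, lowered by ad I and
   raised by each ad q_i, so \<mu> maps L into U_n and (I~)^n maps U_n into U_0 = L. *)

(* Raising a filtration V by one step is maps_along V (\<lambda>i j. j = Suc i), lowering it is
   maps_along V (\<lambda>i j. i = Suc j); composing maps composes the relations. *)
definition maps_along :: "('i \<Rightarrow> 'q set) \<Rightarrow> ('i \<Rightarrow> 'i \<Rightarrow> bool) \<Rightarrow> ('q \<Rightarrow> 'q) \<Rightarrow> bool" where
  "maps_along V R f \<longleftrightarrow> (\<forall>i j v. R i j \<longrightarrow> v \<in> V i \<longrightarrow> f v \<in> V j)"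

lemma maps_alongD: "maps_along V R f \<Longrightarrow> R i j \<Longrightarrow> v \<in> V i \<Longrightarrow> f v \<in> V j"
  unfolding maps_along_def by blast

lemma maps_along_comp:
  "maps_along V R g \<Longrightarrow> maps_along V R' f \<Longrightarrow> maps_along V (R OO R') (f \<circ> g)"
  unfolding maps_along_def by auto

lemma relpowp_succ: "((\<lambda>i j. j = Suc i) ^^ n) i (i + n)"
  by (induction n) (auto intro: relpowp_Suc_I)

lemma relpowp_pred: "((\<lambda>i j. i = Suc j) ^^ n) (i + n) i"
proof (induction n arbitrary: i)
  case (Suc n)
  have "((\<lambda>i j. i = Suc j) ^^ n) (Suc (i + n)) (Suc i)"
    using Suc.IH[of "Suc i"] by simp
  then show ?case by (auto intro: relpowp_Suc_I)
qed simp

lemma ad_prod_Nil: "ad_prod br [] = id"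
  by (simp add: ad_prod_def)

lemma ad_prod_Cons: "ad_prod br (q # qs) = ad br q \<circ> ad_prod br qs"
  by (simp add: ad_prod_def)

lemma ad_prod_maps_along:
  assumes "\<And>q. q \<in> set qs \<Longrightarrow> maps_along V R (ad br q)"
  shows "maps_along V (R ^^ length qs) (ad_prod br qs)"
  using assms
proof (induction qs)
  case Nil
  then show ?case by (simp add: ad_prod_Nil maps_along_def)
next
  case (Cons q qs)
  then have "maps_along V (R ^^ length qs OO R) (ad br q \<circ> ad_prod br qs)"
    by (intro maps_along_comp) simp_all
  then show ?case by (simp only: ad_prod_Cons length_Cons relpowp.simps(2))
qed

lemma ideal_pow_Suc: "n \<noteq> 0 \<Longrightarrow> ideal_pow sc J (Suc n) = set_prod sc J (ideal_pow sc J n)"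
  by (cases n) simp_all

context module
begin

context
  fixes V :: "'i \<Rightarrow> 'b set"
  assumes subspaces: "\<And>i. subspace (V i)"
begin

lemma maps_along_zero: "maps_along V R (\<lambda>x. 0)"
  using subspaces by (simp add: maps_along_def subspace_0)

lemma maps_along_add:
  "maps_along V R f \<Longrightarrow> maps_along V R g \<Longrightarrow> maps_along V R (\<lambda>x. f x + g x)"
  using subspaces by (simp add: maps_along_def subspace_add)

lemma maps_along_scale: "maps_along V R f \<Longrightarrow> maps_along V R (\<lambda>x. c *s f x)"
  using subspaces by (simp add: maps_along_def subspace_scale)

lemma alg_gen_maps_along:
  assumes "\<And>g. g \<in> S \<Longrightarrow> maps_along V (=) g"
  shows "f \<in> alg_gen scale S \<Longrightarrow> maps_along V (=) f"
proof (induction f rule: alg_gen.induct)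
  case (mult f g)
  then show ?case by (metis eq_OO maps_along_comp)
qed (use assms in \<open>auto intro: maps_along_zero maps_along_add maps_along_scale\<close>)

lemma ideal_gen_maps_along:
  assumes "\<And>a. a \<in> A \<Longrightarrow> maps_along V (=) a" and "\<And>g. g \<in> S \<Longrightarrow> maps_along V R g"
  shows "f \<in> ideal_gen scale A S \<Longrightarrow> maps_along V R f"
proof (induction f rule: ideal_gen.induct)
  case (lmult a f)
  then show ?case using assms(1) by (metis OO_eq maps_along_comp)
next
  case (rmult a f)
  then show ?case using assms(1) by (metis eq_OO maps_along_comp)
qed (use assms(2) in \<open>auto intro: maps_along_zero maps_along_add maps_along_scale\<close>)

lemma set_prod_maps_along:
  assumes "\<And>f. f \<in> J \<Longrightarrow> maps_along V R f" and "\<And>g. g \<in> P \<Longrightarrow> maps_along V R' g"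
  shows "h \<in> set_prod scale J P \<Longrightarrow> maps_along V (R' OO R) h"
  by (induction h rule: set_prod.induct)
    (use assms in \<open>blast intro: maps_along_comp maps_along_zero maps_along_add maps_along_scale\<close>)+

lemma ideal_pow_maps_along:
  assumes "\<And>f. f \<in> J \<Longrightarrow> maps_along V R f"
  shows "f \<in> ideal_pow scale J n \<Longrightarrow> maps_along V (R ^^ n) f"
proof (induction n arbitrary: f)
  case 0
  then show ?case by (simp add: maps_along_zero)
next
  case (Suc n)
  show ?case
  proof (cases "n = 0")
    case True
    then show ?thesis using Suc.prems assms by (simp add: eq_OO)
  next
    case False
    then have "f \<in> set_prod scale J (ideal_pow scale J n)"
      using Suc.prems by (simp add: ideal_pow_Suc)
    with assms Suc.IH have "maps_along V (R ^^ n OO R) f"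
      by (rule set_prod_maps_along)
    then show ?thesis by simp
  qed
qed

end

end

lemma alg_gen_mono:
  assumes "S \<subseteq> T"
  shows "alg_gen sc S \<subseteq> alg_gen sc T"
proof
  fix f assume "f \<in> alg_gen sc S"
  then show "f \<in> alg_gen sc T"
    by (induction f rule: alg_gen.induct) (use assms in \<open>blast intro: alg_gen.intros\<close>)+
qed

lemma ideal_gen_subset_alg_gen:
  assumes "A \<subseteq> alg_gen sc T" and "S \<subseteq> alg_gen sc T"
  shows "ideal_gen sc A S \<subseteq> alg_gen sc T"
proof
  fix f assume "f \<in> ideal_gen sc A S"
  then show "f \<in> alg_gen sc T"
    by (induction f rule: ideal_gen.induct) (use assms in \<open>blast intro: alg_gen.intros\<close>)+
qed

lemma set_prod_subset_alg_gen:
  assumes "J \<subseteq> alg_gen sc T" and "P \<subseteq> alg_gen sc T"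
  shows "set_prod sc J P \<subseteq> alg_gen sc T"
proof
  fix f assume "f \<in> set_prod sc J P"
  then show "f \<in> alg_gen sc T"
    by (induction f rule: set_prod.induct) (use assms in \<open>blast intro: alg_gen.intros\<close>)+
qed

lemma ideal_pow_subset_alg_gen:
  "J \<subseteq> alg_gen sc T \<Longrightarrow> ideal_pow sc J n \<subseteq> alg_gen sc T"
  by (induction sc J n rule: ideal_pow.induct) (simp_all add: alg_gen.zero set_prod_subset_alg_gen)

lemma ad_prod_in_alg_gen:
  assumes "qs \<noteq> []" and "ad br ` set qs \<subseteq> S"
  shows "ad_prod br qs \<in> alg_gen sc S"
  using assms
proof (induction qs rule: list_nonempty_induct)
  case (single q)
  then show ?case by (simp add: ad_prod_def alg_gen.gen)
next
  case (cons q qs)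
  then have "ad br q \<in> alg_gen sc S" and "ad_prod br qs \<in> alg_gen sc S"
    by (auto intro: alg_gen.gen)
  then show ?case unfolding ad_prod_Cons by (rule alg_gen.mult)
qed

lemma Itilde_subset_AQ: "Itilde sc br L I \<subseteq> AQ sc br"
  unfolding Itilde_def AQL_def AQ_def
  by (intro ideal_gen_subset_alg_gen alg_gen_mono) (auto intro: alg_gen.gen)

context lie_algebra
begin

lemma br_zero_right [simp]: "br x 0 = 0"
  using br_add_right[of x 0 0] by simp

lemma br_minus_right: "br x (- y) = - br x y"
  using br_add_right[of x "- y" y] by (simp add: eq_neg_iff_add_eq_0)

lemma br_anticomm: "br y x = - br x y"
proof -
  have "0 = br (x + y) (x + y)" by (simp add: br_alt)
  also have "\<dots> = br y x + br x y"
    by (simp add: br_add_left br_add_right br_alt[of x] br_alt[of y] ac_simps)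
  finally show ?thesis by (metis eq_neg_iff_add_eq_0)
qed

lemma br_derivation: "br a (br b c) = br (br a b) c + br b (br a c)"
proof -
  have "br a (br b c) = - br b (br c a) - br c (br a b)"
    using jacobi[of a b c] by (simp add: eq_diff_eq eq_neg_iff_add_eq_0 ac_simps)
  also have "\<dots> = br (br a b) c + br b (br a c)"
    by (simp add: br_anticomm[of c a] br_anticomm[of c "br a b"] br_minus_right add.commute)
  finally show ?thesis .
qed

lemma subspace_br_preimage: "subspace S \<Longrightarrow> subspace {v. br x v \<in> S}"
  by (simp add: subspace_def br_add_right br_scale_right)

end

locale lie_subalgebra_ideal = lie_algebra sc br
  for sc :: "'r::comm_ring_1 \<Rightarrow> 'q::ab_group_add \<Rightarrow> 'q" and br +
  fixes L I :: "'q set"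
  assumes subalgebra: "lie_subalgebra sc br L"
    and ideal: "lie_ideal sc br L I"
begin

lemma subspace_L: "subspace L"
  using subalgebra by (simp add: lie_subalgebra_def subspace_def)

lemma subspace_I: "subspace I"
  using ideal by (simp add: lie_ideal_def subspace_def)

lemma I_subset_L: "I \<subseteq> L"
  using ideal by (simp add: lie_ideal_def)

lemma br_L_L: "x \<in> L \<Longrightarrow> y \<in> L \<Longrightarrow> br x y \<in> L"
  using subalgebra by (simp add: lie_subalgebra_def)

lemma br_L_I: "y \<in> L \<Longrightarrow> x \<in> I \<Longrightarrow> br y x \<in> I"
  using ideal by (simp add: lie_ideal_def)

lemma br_I_L: "x \<in> I \<Longrightarrow> y \<in> L \<Longrightarrow> br x y \<in> I"
  using br_L_I[of y x] subspace_neg[OF subspace_I] by (simp add: br_anticomm[of x y])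

lemma ideal_pow_Itilde_maps_along:
  assumes "f \<in> ideal_pow sc (Itilde sc br L I) n"
    and "\<And>k. subspace (V k)"
    and "\<And>y. y \<in> L \<Longrightarrow> maps_along V (=) (ad br y)"
    and "\<And>x. x \<in> I \<Longrightarrow> maps_along V R (ad br x)"
  shows "maps_along V (R ^^ n) f"
proof -
  have gens_L: "maps_along V (=) g" if "g \<in> ad br ` L" for g
    using that assms(3) by blast
  have gens_I: "maps_along V R g" if "g \<in> ad br ` I" for g
    using that assms(4) by blast
  have AQL: "maps_along V (=) a" if "a \<in> AQL sc br L" for a
    using assms(2) gens_L that unfolding AQL_def by (rule alg_gen_maps_along)
  have Itilde: "maps_along V R g" if "g \<in> Itilde sc br L I" for g
    using assms(2) AQL gens_I that unfolding Itilde_def by (rule ideal_gen_maps_along)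
  show ?thesis
    using assms(2) Itilde assms(1) by (rule ideal_pow_maps_along)
qed

primrec lower_series :: "nat \<Rightarrow> 'q set" where
  "lower_series 0 = L"
| "lower_series (Suc k) = span {br x v | x v. x \<in> I \<and> v \<in> lower_series k}"

lemma subspace_lower_series: "subspace (lower_series k)"
  by (cases k) (simp_all add: subspace_L)

lemma lower_series_subset_L: "lower_series k \<subseteq> L"
proof (induction k)
  case (Suc k)
  then have "span {br x v | x v. x \<in> I \<and> v \<in> lower_series k} \<subseteq> I"
    by (intro span_minimal subspace_I) (auto intro: br_I_L)
  then show ?case using I_subset_L by simp
qed simp

lemma lower_series_Suc_subset_I: "lower_series (Suc k) \<subseteq> I"
  unfolding lower_series.simps
  by (rule span_minimal) (use lower_series_subset_L in \<open>auto intro: br_I_L subspace_I\<close>)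

lemma br_I_lower_series: "x \<in> I \<Longrightarrow> v \<in> lower_series k \<Longrightarrow> br x v \<in> lower_series (Suc k)"
  by (auto intro: span_base)

lemma br_L_lower_series: "y \<in> L \<Longrightarrow> v \<in> lower_series k \<Longrightarrow> br y v \<in> lower_series k"
proof (induction k arbitrary: v)
  case 0
  then show ?case by (simp add: br_L_L)
next
  case (Suc k)
  let ?G = "{br x w | x w. x \<in> I \<and> w \<in> lower_series k}"
  have "?G \<subseteq> {v. br y v \<in> span ?G}"
  proof clarify
    fix x w assume "x \<in> I" "w \<in> lower_series k"
    then have "br (br y x) w \<in> span ?G" and "br x (br y w) \<in> span ?G"
      using Suc.IH Suc.prems(1) br_L_I by (blast intro: span_base)+
    then show "br y (br x w) \<in> span ?G"
      by (simp add: br_derivation[of y x w] span_add)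
  qed
  then have "span ?G \<subseteq> {v. br y v \<in> span ?G}"
    by (intro span_minimal subspace_br_preimage subspace_span)
  then show ?case using Suc.prems(2) by auto
qed

lemma br_q_lower_series:
  assumes q: "\<forall>x\<in>I. br q x \<in> L"
  shows "v \<in> lower_series (Suc k) \<Longrightarrow> br q v \<in> lower_series k"
proof (induction k arbitrary: v)
  case 0
  then show ?case using q lower_series_Suc_subset_I[of 0] by auto
next
  case (Suc k)
  let ?G = "{br x w | x w. x \<in> I \<and> w \<in> lower_series (Suc k)}"
  have "?G \<subseteq> {v. br q v \<in> lower_series (Suc k)}"
  proof clarify
    fix x w assume x: "x \<in> I" and w: "w \<in> lower_series (Suc k)"
    have "br (br q x) w \<in> lower_series (Suc k)"
      using q x w br_L_lower_series by blast
    moreover have "br x (br q w) \<in> lower_series (Suc k)"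
      using Suc.IH x w br_I_lower_series by blast
    ultimately show "br q (br x w) \<in> lower_series (Suc k)"
      by (simp add: br_derivation[of q x w] subspace_add subspace_lower_series)
  qed
  then have "span ?G \<subseteq> {v. br q v \<in> lower_series (Suc k)}"
    by (intro span_minimal subspace_br_preimage subspace_lower_series)
  then show ?case using Suc.prems by auto
qed

lemma ad_prod_ideal_pow_Itilde_preserves_L:
  assumes q: "\<forall>q\<in>set qs. \<forall>x\<in>I. br q x \<in> L"
    and f: "f \<in> ideal_pow sc (Itilde sc br L I) (length qs)" and v: "v \<in> L"
  shows "ad_prod br qs (f v) \<in> L"
proof -
  have "maps_along lower_series ((\<lambda>i j. j = Suc i) ^^ length qs) f"
    using f by (rule ideal_pow_Itilde_maps_along)
      (auto simp: maps_along_def ad_def subspace_lower_series simp del: lower_series.simps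
        intro: br_L_lower_series br_I_lower_series)
  then have "f v \<in> lower_series (length qs)"
    using v relpowp_succ[of "length qs" 0] by (auto dest: maps_alongD)
  moreover have "maps_along lower_series ((\<lambda>i j. i = Suc j) ^^ length qs) (ad_prod br qs)"
    using q by (intro ad_prod_maps_along) (auto simp: maps_along_def ad_def br_q_lower_series)
  ultimately show ?thesis
    using relpowp_pred[of "length qs" 0] by (auto dest: maps_alongD)
qed

primrec upper_series :: "nat \<Rightarrow> 'q set" where
  "upper_series 0 = L"
| "upper_series (Suc k) = {v. \<forall>x\<in>I. br x v \<in> upper_series k}"

lemma subspace_upper_series: "subspace (upper_series k)"
proof (induction k)
  case 0
  then show ?case by (simp add: subspace_L)
next
  case (Suc k)
  then show ?case by (simp add: subspace_def br_add_right br_scale_right)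
qed

lemma br_L_upper_series: "y \<in> L \<Longrightarrow> v \<in> upper_series k \<Longrightarrow> br y v \<in> upper_series k"
proof (induction k arbitrary: v)
  case 0
  then show ?case by (simp add: br_L_L)
next
  case (Suc k)
  have "br x (br y v) \<in> upper_series k" if x: "x \<in> I" for x
  proof -
    have "br (br x y) v \<in> upper_series k"
      using Suc.prems x br_I_L by simp
    moreover have "br y (br x v) \<in> upper_series k"
      using Suc x by simp
    ultimately show ?thesis
      by (simp add: br_derivation[of x y v] subspace_add subspace_upper_series)
  qed
  then show ?case by simp
qed

lemma br_q_upper_series:
  assumes q: "\<forall>x\<in>I. br q x \<in> L"
  shows "v \<in> upper_series k \<Longrightarrow> br q v \<in> upper_series (Suc k)"
proof -
  have xq: "br x q \<in> L" if "x \<in> I" for x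
    using q that subspace_neg[OF subspace_L] by (simp add: br_anticomm[of x q])
  show "v \<in> upper_series k \<Longrightarrow> br q v \<in> upper_series (Suc k)"
  proof (induction k arbitrary: v)
    case 0
    have "br x (br q v) \<in> L" if x: "x \<in> I" for x
    proof -
      have "br (br x q) v \<in> L" using xq x 0 by (simp add: br_L_L)
      moreover have "br q (br x v) \<in> L" using q x 0 by (simp add: br_I_L)
      ultimately show ?thesis
        by (simp add: br_derivation[of x q v] subspace_add subspace_L)
    qed
    then show ?case by simp
  next
    case (Suc k)
    have "br x (br q v) \<in> upper_series (Suc k)" if x: "x \<in> I" for x
    proof -
      have "br (br x q) v \<in> upper_series (Suc k)"
        using xq[OF x] Suc.prems by (rule br_L_upper_series)
      moreover have "br q (br x v) \<in> upper_series (Suc k)"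
        using Suc x by simp
      ultimately show ?thesis
        unfolding br_derivation[of x q v] by (rule subspace_add[OF subspace_upper_series])
    qed
    then show ?case by simp
  qed
qed

lemma ideal_pow_Itilde_ad_prod_preserves_L:
  assumes q: "\<forall>q\<in>set qs. \<forall>x\<in>I. br q x \<in> L"
    and f: "f \<in> ideal_pow sc (Itilde sc br L I) (length qs)" and v: "v \<in> L"
  shows "f (ad_prod br qs v) \<in> L"
proof -
  have "maps_along upper_series ((\<lambda>i j. j = Suc i) ^^ length qs) (ad_prod br qs)"
    using q by (intro ad_prod_maps_along)
      (auto simp: maps_along_def ad_def simp del: upper_series.simps intro: br_q_upper_series)
  then have "ad_prod br qs v \<in> upper_series (length qs)"
    using v relpowp_succ[of "length qs" 0] by (auto dest: maps_alongD)
  moreover have "maps_along upper_series ((\<lambda>i j. i = Suc j) ^^ length qs) f"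
    using f by (rule ideal_pow_Itilde_maps_along)
      (auto simp: maps_along_def ad_def subspace_upper_series br_L_upper_series)
  ultimately show ?thesis
    using relpowp_pred[of "length qs" 0] by (auto dest: maps_alongD)
qed

end

theorem mainTheorem7:
  fixes sc :: "'r::comm_ring_1 \<Rightarrow> 'q::ab_group_add \<Rightarrow> 'q"
    and br :: "'q \<Rightarrow> 'q \<Rightarrow> 'q"
    and L I :: "'q set" and qs :: "'q list"
  assumes "lie_algebra sc br"
    and "lie_subalgebra sc br L"
    and "lie_ideal sc br L I"
    and "qs \<noteq> []"
    and "\<forall>q\<in>set qs. \<forall>x\<in>I. br q x \<in> L"
  shows "(\<lambda>f. ad_prod br qs \<circ> f) ` ideal_pow sc (Itilde sc br L I) (length qs) \<subseteq> A0 sc br L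
    \<and> (\<lambda>f. f \<circ> ad_prod br qs) ` ideal_pow sc (Itilde sc br L I) (length qs) \<subseteq> A0 sc br L"
proof -
  interpret lie_subalgebra_ideal sc br L I
    using assms(1-3) by (simp add: lie_subalgebra_ideal_def lie_subalgebra_ideal_axioms_def)
  have \<mu>: "ad_prod br qs \<in> AQ sc br"
    using assms(4) unfolding AQ_def by (rule ad_prod_in_alg_gen) auto
  have J: "ideal_pow sc (Itilde sc br L I) (length qs) \<subseteq> AQ sc br"
    using Itilde_subset_AQ unfolding AQ_def by (rule ideal_pow_subset_alg_gen)
  show ?thesis
    using \<mu> J assms(5) ad_prod_ideal_pow_Itilde_preserves_L ideal_pow_Itilde_ad_prod_preserves_L
    unfolding A0_def AQ_def by (auto intro: alg_gen.mult)
qed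

end
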